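(* For any integers $n\ge2$ and $a$, $G(\alpha;n,na,n)\ne\emptyset$ if and only if $a\ge2$ and $\alpha>0$.
   Context: Work on $\mathbb P^1$ over an algebraically closed field. A coherent system of type $(n,d,k)$ is a pair $(E,V)$ with $E$ a vector bundle of rank $n$ and degree $d$ and $V\subset H^0(E)$ a subspace of dimension $k$. The $\alpha$-slope is $\mu_\alpha(E,V)=\frac dn+\alpha\frac kn$; a coherent subsystem $(F,W)$ has $F\subset E$ a subbundle and $W\subset V\cap H^0(F)$; $(E,V)$ is $\alpha$-stable if $\mu_\alpha(F,W)<\mu_\alpha(E,V)$ for all proper coherent subsystems. $G(\alpha;n,d,k)$ is the moduli space of $\alpha$-stable coherent systems of type $(n,d,k)$. *)

theory Defs
  imports "HOL-Computational_Algebra.Polynomial" Complex_Main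
begin

text \<open>By Grothendieck's splitting theorem every vector bundle of rank n on P^1 is
  O(a_1) + ... + O(a_n); it is recorded by its splitting type, a list of integers.
  A global section of O(d) is a binary form of degree d, represented by its
  dehomogenisation at t = 1, i.e. a polynomial of degree at most d (zero if d < 0).
  Morphisms O(b) -> O(a) are forms of degree a - b.\<close>

definition hform :: "int \<Rightarrow> 'k::field poly \<Rightarrow> bool" where
  "hform d p \<longleftrightarrow> (if d < 0 then p = 0 else degree p \<le> nat d)"

definition sections :: "int list \<Rightarrow> (nat \<Rightarrow> 'k::field poly) set" where
  "sections as = {s. (\<forall>i<length as. hform (as!i) (s i)) \<and> (\<forall>i\<ge>length as. s i = 0)}"

definition bdeg :: "int list \<Rightarrow> int" where
  "bdeg as = sum_list as"

definition lin_comb :: "(nat \<Rightarrow> 'k::field) \<Rightarrow> (nat \<Rightarrow> 'k poly) list \<Rightarrow> nat \<Rightarrow> 'k poly" where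
  "lin_comb c vs = (\<lambda>i. \<Sum>j<length vs. smult (c j) ((vs!j) i))"

definition lin_indep :: "(nat \<Rightarrow> 'k::field poly) list \<Rightarrow> bool" where
  "lin_indep vs \<longleftrightarrow> (\<forall>c. lin_comb c vs = (\<lambda>_. 0) \<longrightarrow> (\<forall>j<length vs. c j = 0))"

definition lspan :: "(nat \<Rightarrow> 'k::field poly) list \<Rightarrow> (nat \<Rightarrow> 'k poly) set" where
  "lspan vs = {lin_comb c vs | c. True}"

text \<open>Fibre of a morphism matrix M : O(bs) -> O(as) at the affine point [x:1] and at
  the point at infinity [1:0].\<close>
definition fibre_aff :: "int list \<Rightarrow> int list \<Rightarrow> (nat \<Rightarrow> nat \<Rightarrow> 'k::field poly) \<Rightarrow> 'k \<Rightarrow> nat \<Rightarrow> nat \<Rightarrow> 'k" where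
  "fibre_aff as bs M x = (\<lambda>i j. poly (M i j) x)"

definition fibre_inf :: "int list \<Rightarrow> int list \<Rightarrow> (nat \<Rightarrow> nat \<Rightarrow> 'k::field poly) \<Rightarrow> nat \<Rightarrow> nat \<Rightarrow> 'k" where
  "fibre_inf as bs M = (\<lambda>i j. if as!i - bs!j < 0 then 0 else coeff (M i j) (nat (as!i - bs!j)))"

definition inj_matrix :: "nat \<Rightarrow> nat \<Rightarrow> (nat \<Rightarrow> nat \<Rightarrow> 'k::field) \<Rightarrow> bool" where
  "inj_matrix n m A \<longleftrightarrow> (\<forall>c. (\<forall>i<n. (\<Sum>j<m. A i j * c j) = 0) \<longrightarrow> (\<forall>j<m. c j = 0))"

text \<open>M is an embedding of the bundle O(bs) as a subbundle of O(as): a morphism of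
  bundles that is injective on every fibre of P^1.\<close>
definition subbundle_emb :: "int list \<Rightarrow> int list \<Rightarrow> (nat \<Rightarrow> nat \<Rightarrow> 'k::field poly) \<Rightarrow> bool" where
  "subbundle_emb as bs M \<longleftrightarrow>
     (\<forall>i<length as. \<forall>j<length bs. hform (as!i - bs!j) (M i j)) \<and>
     (\<forall>x. inj_matrix (length as) (length bs) (fibre_aff as bs M x)) \<and>
     inj_matrix (length as) (length bs) (fibre_inf as bs M)"

definition sub_sections :: "int list \<Rightarrow> int list \<Rightarrow> (nat \<Rightarrow> nat \<Rightarrow> 'k::field poly) \<Rightarrow> (nat \<Rightarrow> 'k poly) set" where
  "sub_sections as bs M =
     {(\<lambda>i. if i < length as then (\<Sum>j<length bs. M i j * q j) else 0) | q. q \<in> sections bs}"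

definition mu :: "real \<Rightarrow> int \<Rightarrow> int \<Rightarrow> nat \<Rightarrow> real" where
  "mu \<alpha> n d k = real_of_int d / real_of_int n + \<alpha> * real k / real_of_int n"

text \<open>A coherent system (E,V): E with splitting type as, V spanned by the linearly
  independent sections vs (so dim V = length vs).\<close>
definition coh_system :: "int list \<Rightarrow> (nat \<Rightarrow> 'k::field poly) list \<Rightarrow> bool" where
  "coh_system as vs \<longleftrightarrow> set vs \<subseteq> sections as \<and> lin_indep vs"

text \<open>A coherent subsystem (F,W) is given by a subbundle F (nonzero,
  splitting type bs, embedding M) and W \<subseteq> V \<inter> H^0(F), given by a basis ws.
  It is proper if F \<noteq> E (rank smaller) or W \<noteq> V (dimension smaller).\<close>
definition alpha_stable :: "real \<Rightarrow> int list \<Rightarrow> (nat \<Rightarrow> 'k::field poly) list \<Rightarrow> bool" where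
  "alpha_stable \<alpha> as vs \<longleftrightarrow> coh_system as vs \<and> as \<noteq> [] \<and>
     (\<forall>bs M ws. bs \<noteq> [] \<and> length bs \<le> length as \<and> subbundle_emb as bs M \<and>
        lin_indep ws \<and> set ws \<subseteq> lspan vs \<inter> sub_sections as bs M \<and>
        (length bs < length as \<or> length ws < length vs) \<longrightarrow>
        mu \<alpha> (int (length bs)) (bdeg bs) (length ws)
          < mu \<alpha> (int (length as)) (bdeg as) (length vs))"

definition G_nonempty :: "'k::field itself \<Rightarrow> real \<Rightarrow> nat \<Rightarrow> int \<Rightarrow> nat \<Rightarrow> bool" where
  "G_nonempty _ \<alpha> n d k \<longleftrightarrow>
     (\<exists>as (vs :: (nat \<Rightarrow> 'k poly) list). length as = n \<and> bdeg as = d \<and> length vs = k \<and>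
        alpha_stable \<alpha> as vs)"

end

theory Submission
  imports Defs Jordan_Normal_Form.Determinant "HOL-Library.Function_Algebras"
begin

text \<open>
  Necessity. The subsystem (E, 0) gives \<alpha> > 0. Dividing a nonzero section s \<in> V by the
  linear forms at which it vanishes, s becomes a nowhere vanishing section of a line
  subbundle O(b) \<subseteq> E with b \<ge> 0, and the subsystem (O(b), \<langle>s\<rangle>) gives b < a; hence a \<ge> 1.
  If a = 1, every nonzero s \<in> V vanishes nowhere, so V \<otimes> O \<rightarrow> E is a fibrewise injective
  map O^n \<rightarrow> E; its determinant is a nonzero constant whose coefficient of degree deg E is
  the nonzero fibre determinant at infinity, so deg E = 0, contradicting deg E = n.

  Sufficiency. Take E = O(a)^n and V spanned by s_j = e_j + t e_{j+1} + t^2 e_{j-1}. The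
  summands of a subbundle F of E have degree at most a, and the constant terms of a subspace
  W \<subseteq> V \<inter> H^0(F) are independent and lie in the span of the constant terms of F, so
  dim W \<le> rk F. Equal slopes would force F = O(a)^m embedded by a constant matrix and
  dim W = m; then the span of the constant terms of W is invariant under both shifts of
  coordinates, hence everything, so m = n.
\<close>

text \<open>Vectors of k^n are modelled as functions nat \<Rightarrow> 'k vanishing from n on.\<close>
interpretation fvec: vector_space "\<lambda>(c::'k::field) (u::nat \<Rightarrow> 'k) i. c * u i"
  by unfold_locales (auto simp: fun_eq_iff algebra_simps)

lemma sum_fun_apply: "sum f A x = (\<Sum>a\<in>A. f a x)"
  by (induction A rule: infinite_finite_induct) auto

definition vec_comb :: "(nat \<Rightarrow> 'k::field) \<Rightarrow> (nat \<Rightarrow> 'k) list \<Rightarrow> nat \<Rightarrow> 'k" where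
  "vec_comb d us = (\<lambda>i. \<Sum>l<length us. d l * (us!l) i)"

definition vec_indep :: "(nat \<Rightarrow> 'k::field) list \<Rightarrow> bool" where
  "vec_indep us \<longleftrightarrow> (\<forall>d. vec_comb d us = 0 \<longrightarrow> (\<forall>l<length us. d l = 0))"

lemma vec_indep_nth_nonzero:
  assumes "vec_indep us" "l < length us"
  shows "us!l \<noteq> 0"
proof
  assume zero: "us!l = 0"
  have "vec_comb (\<lambda>x. if x = l then 1 else 0) us = 0"
    using assms(2) zero by (simp add: vec_comb_def fun_eq_iff if_distrib[of "\<lambda>c. c * _"] sum.delta cong: if_cong)
  then show False using assms by (auto simp: vec_indep_def dest!: spec[of _ "\<lambda>x. if x = l then 1 else 0"])
qed

lemma vec_indep_distinct:
  assumes "vec_indep us" shows "distinct us"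
proof (rule ccontr)
  assume "\<not> distinct us"
  then obtain l l' where ll: "l < length us" "l' < length us" "l \<noteq> l'" "us!l = us!l'"
    by (auto simp: distinct_conv_nth)
  define d where "d = (\<lambda>x. if x = l then (1::'a) else if x = l' then -1 else 0)"
  have "vec_comb d us = 0"
  proof
    fix i
    have "(\<Sum>x<length us. d x * (us!x) i) = (\<Sum>x\<in>{l,l'}. d x * (us!x) i)"
      by (rule sum.mono_neutral_right) (use ll in \<open>auto simp: d_def\<close>)
    also have "\<dots> = 0" using ll by (simp add: d_def)
    finally show "vec_comb d us i = 0 i" by (simp add: vec_comb_def)
  qed
  with assms ll show False by (auto simp: vec_indep_def d_def dest!: spec[of _ d])
qed

lemma vec_indep_independent:
  assumes "vec_indep us" shows "fvec.independent (set us)"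
proof (subst fvec.dependent_finite, simp, intro notI, elim exE conjE bexE)
  fix u v assume v: "v \<in> set us" "u v \<noteq> 0" and zero: "(\<Sum>v\<in>set us. (\<lambda>i. u v * v i)) = 0"
  have sum_set: "(\<Sum>v\<in>set us. f v) = (\<Sum>l<length us. f (us!l))" for f :: "(nat \<Rightarrow> 'a) \<Rightarrow> 'a"
    using vec_indep_distinct[OF assms]
    by (simp add: sum_list_distinct_conv_sum_set[symmetric] sum_list_sum_nth atLeast0LessThan)
  have "vec_comb (\<lambda>l. u (us!l)) us = 0"
  proof
    fix i
    have "vec_comb (\<lambda>l. u (us!l)) us i = (\<Sum>v\<in>set us. u v * v i)"
      by (simp add: vec_comb_def sum_set)
    also have "\<dots> = 0" using fun_cong[OF zero, of i] by (simp add: sum_fun_apply)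
    finally show "vec_comb (\<lambda>l. u (us!l)) us i = 0 i" by simp
  qed
  moreover obtain l where "l < length us" "us!l = v" using v by (auto simp: in_set_conv_nth)
  ultimately show False using assms v by (auto simp: vec_indep_def)
qed

lemma vec_comb_in_span: "vec_comb d us \<in> fvec.span (set us)"
proof -
  have "vec_comb d us = (\<Sum>l<length us. (\<lambda>i. d l * (us!l) i))"
    by (simp add: vec_comb_def fun_eq_iff sum_fun_apply)
  also have "\<dots> \<in> fvec.span (set us)"
    by (intro fvec.span_sum fvec.span_scale[of _ _ "d _", simplified] fvec.span_base) auto
  finally show ?thesis .
qed

lemma vec_indep_length_le:
  assumes "vec_indep us" and "set us \<subseteq> fvec.span (set vs)"
  shows "length us \<le> length vs"
proof -
  have "length us = card (set us)" using distinct_card[OF vec_indep_distinct[OF assms(1)]] by simp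
  also have "\<dots> \<le> card (set vs)"
    using fvec.independent_span_bound[OF _ vec_indep_independent[OF assms(1)] assms(2)] by auto
  also have "\<dots> \<le> length vs" by (rule card_length)
  finally show ?thesis .
qed

lemma vec_indep_spans_span:
  assumes "vec_indep us" "set us \<subseteq> fvec.span (set vs)" "length vs \<le> length us"
  shows "fvec.span (set vs) \<subseteq> fvec.span (set us)"
proof
  fix y assume y: "y \<in> fvec.span (set vs)"
  show "y \<in> fvec.span (set us)"
  proof (rule ccontr)
    assume y_out: "y \<notin> fvec.span (set us)"
    then have "fvec.independent (insert y (set us))"
      using fvec.independent_insertI vec_indep_independent[OF assms(1)] by blast
    moreover have "insert y (set us) \<subseteq> fvec.span (set vs)" using y assms(2) by auto
    moreover have "y \<notin> set us" using y_out fvec.span_base[of y "set us"] by blast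
    ultimately have "Suc (length us) \<le> card (set vs)"
      using fvec.independent_span_bound[of "set vs" "insert y (set us)"]
        distinct_card[OF vec_indep_distinct[OF assms(1)]] by simp
    also have "\<dots> \<le> length vs" by (rule card_length)
    finally show False using assms(3) by simp
  qed
qed

lemma fvec_span_closed_linear:
  fixes f :: "(nat \<Rightarrow> 'k::field) \<Rightarrow> nat \<Rightarrow> 'k"
  assumes add: "\<And>x y. f (x + y) = f x + f y" and scale: "\<And>c x. f (\<lambda>i. c * x i) = (\<lambda>i. c * f x i)"
    and gen: "\<And>u. u \<in> B \<Longrightarrow> f u \<in> fvec.span B" and y: "y \<in> fvec.span B"
  shows "f y \<in> fvec.span B"
proof -
  have "f 0 = f 0 + f 0" using add[of 0 0] by simp
  then have "f 0 = 0" by simp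
  then have "fvec.subspace {y. f y \<in> fvec.span B}"
    by (intro fvec.subspaceI) (auto simp: add scale fvec.span_zero fvec.span_add fvec.span_scale)
  from fvec.span_induct[OF y this] gen show ?thesis by auto
qed

lemma fvec_span_vanishing:
  assumes "\<And>u. u \<in> B \<Longrightarrow> u i = 0" "y \<in> fvec.span B"
  shows "y i = (0::'k::field)"
proof -
  have "fvec.subspace {y. y i = (0::'k)}" by (intro fvec.subspaceI) auto
  from fvec.span_induct[OF assms(2) this] assms(1) show ?thesis by auto
qed

definition shift_right :: "nat \<Rightarrow> (nat \<Rightarrow> 'k::zero) \<Rightarrow> nat \<Rightarrow> 'k" where
  "shift_right n u = (\<lambda>i. if 0 < i \<and> i < n then u (i - 1) else 0)"

definition shift_left :: "nat \<Rightarrow> (nat \<Rightarrow> 'k::zero) \<Rightarrow> nat \<Rightarrow> 'k" where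
  "shift_left n u = (\<lambda>i. if Suc i < n then u (Suc i) else 0)"

definition basis_fun :: "nat \<Rightarrow> nat \<Rightarrow> 'k::{zero,one}" where
  "basis_fun t = (\<lambda>i. if i = t then 1 else 0)"

lemma vec_indep_basis_funs: "vec_indep (map basis_fun [0..<n] :: (nat \<Rightarrow> 'k::field) list)"
  unfolding vec_indep_def
proof (intro allI impI)
  fix d :: "nat \<Rightarrow> 'k" and l
  assume d: "vec_comb d (map basis_fun [0..<n]) = 0" and l: "l < length (map basis_fun [0..<n] :: (nat \<Rightarrow> 'k) list)"
  have "vec_comb d (map basis_fun [0..<n]) l = d l"
    using l by (simp add: vec_comb_def basis_fun_def if_distrib[of "\<lambda>c. _ * c"] cong: if_cong)
  then show "d l = 0" using d by simp
qed

lemma shift_invariant_subspace_basis_fun: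
  fixes S :: "(nat \<Rightarrow> 'k::field) set"
  assumes S: "fvec.subspace S" and supp: "\<And>u i. u \<in> S \<Longrightarrow> n \<le> i \<Longrightarrow> u i = 0"
    and right: "\<And>u. u \<in> S \<Longrightarrow> shift_right n u \<in> S" and left: "\<And>u. u \<in> S \<Longrightarrow> shift_left n u \<in> S"
    and u: "u \<in> S" "u \<noteq> 0"
  shows "t < n \<Longrightarrow> basis_fun t \<in> S"
proof (induction t)
  case 0
  obtain k where k: "u k \<noteq> 0" using u(2) by (auto simp: fun_eq_iff)
  have "k < n" using supp[OF u(1), of k] k by (cases "k < n") auto
  \<comment> \<open>y = shift_left^k u has y 0 = u k, and y - shift_right (shift_left y)
    keeps only that entry\<close>
  have left_pow: "(shift_left n ^^ t) u = (\<lambda>i. if i + t < n then u (i + t) else 0)" for t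
    by (induction t) (auto simp: fun_eq_iff shift_left_def supp[OF u(1)])
  define y where "y = (shift_left n ^^ k) u"
  have y: "y \<in> S" unfolding y_def by (induction k) (auto simp: u left)
  have "y - shift_right n (shift_left n y) = (\<lambda>i. u k * basis_fun 0 i)"
    using \<open>k < n\<close> supp[OF y] by (auto simp: fun_eq_iff y_def left_pow shift_right_def shift_left_def basis_fun_def)
  then have "(\<lambda>i. u k * basis_fun 0 i) \<in> S" using y by (metis S fvec.subspace_diff left right)
  from fvec.subspace_scale[OF S this, of "inverse (u k)"] show ?case using k by simp
next
  case (Suc t)
  then have "shift_right n (basis_fun t) \<in> S" by (intro right) simp
  moreover have "shift_right n (basis_fun t) = (basis_fun (Suc t) :: nat \<Rightarrow> 'k)"
    using Suc.prems by (auto simp: shift_right_def basis_fun_def fun_eq_iff)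
  ultimately show ?case by simp
qed

lemma shift_invariant_span_length_ge:
  fixes us :: "(nat \<Rightarrow> 'k::field) list"
  assumes indep: "vec_indep us" and nonempty: "us \<noteq> []"
    and supp: "\<And>u i. u \<in> set us \<Longrightarrow> n \<le> i \<Longrightarrow> u i = 0"
    and right: "\<And>u. u \<in> set us \<Longrightarrow> shift_right n u \<in> fvec.span (set us)"
    and left: "\<And>u. u \<in> set us \<Longrightarrow> shift_left n u \<in> fvec.span (set us)"
  shows "n \<le> length us"
proof -
  let ?S = "fvec.span (set us)"
  have "basis_fun t \<in> ?S" if "t < n" for t
  proof (rule shift_invariant_subspace_basis_fun[OF fvec.subspace_span _ _ _ _ _ that])
    show "u i = 0" if "u \<in> ?S" "n \<le> i" for u i
      using fvec_span_vanishing[OF _ that(1)] supp that(2) by blast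
    show "shift_right n u \<in> ?S" if "u \<in> ?S" for u
      by (rule fvec_span_closed_linear[OF _ _ right that]) (auto simp: shift_right_def fun_eq_iff)
    show "shift_left n u \<in> ?S" if "u \<in> ?S" for u
      by (rule fvec_span_closed_linear[OF _ _ left that]) (auto simp: shift_left_def fun_eq_iff)
    show "us!0 \<in> ?S" using nonempty by (intro fvec.span_base) simp
    show "us!0 \<noteq> 0" using vec_indep_nth_nonzero[OF indep] nonempty by simp
  qed
  then have "length (map basis_fun [0..<n] :: (nat \<Rightarrow> 'k) list) \<le> length us"
    by (intro vec_indep_length_le[OF vec_indep_basis_funs]) auto
  then show ?thesis by simp
qed

lemma hform_iff: "hform d p \<longleftrightarrow> p = 0 \<or> (0 \<le> d \<and> int (degree p) \<le> d)"
  by (auto simp: hform_def)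

lemma hform_0 [simp]: "hform d 0"
  by (simp add: hform_def)

lemma hform_add: "hform d p \<Longrightarrow> hform d q \<Longrightarrow> hform d (p + q)"
  unfolding hform_def using degree_add_le by (auto split: if_splits)

lemma hform_smult: "hform d p \<Longrightarrow> hform d (Polynomial.smult c p)"
  unfolding hform_def using degree_smult_le[of c p] by (auto split: if_splits)

lemma hform_sum: "(\<And>j. j \<in> A \<Longrightarrow> hform d (f j)) \<Longrightarrow> hform d (sum f A)"
  by (induction A rule: infinite_finite_induct) (auto intro: hform_add)

lemma hform_diff1_if_top_coeff_0:
  assumes "hform d p" "0 \<le> d \<Longrightarrow> coeff p (nat d) = 0"
  shows "hform (d - 1) p"
proof (cases "p = 0")
  case False
  with assms(1) have d: "0 \<le> d" "int (degree p) \<le> d" by (auto simp: hform_iff)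
  have "degree p \<noteq> nat d" using assms(2)[OF d(1)] False by (metis leading_coeff_0_iff)
  with d show ?thesis by (auto simp: hform_iff)
qed simp

lemma hform_diff1_if_root:
  assumes "hform d p" "poly p x = 0"
  shows "hform (d - 1) (p div [:-x, 1:])" "p = (p div [:-x, 1:]) * [:-x, 1:]"
proof -
  have "[:-x, 1:] dvd p" using assms(2) by (simp add: poly_eq_0_iff_dvd)
  then show eq: "p = (p div [:-x, 1:]) * [:-x, 1:]" by (metis dvd_div_mult_self)
  show "hform (d - 1) (p div [:-x, 1:])"
  proof (cases "p div [:-x, 1:] = 0")
    case False
    then have "degree ((p div [:-x, 1:]) * [:-x, 1:]) = degree (p div [:-x, 1:]) + 1"
      by (subst degree_mult_eq) auto
    then have "degree p = degree (p div [:-x, 1:]) + 1" using eq by metis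
    with False assms(1) show ?thesis by (auto simp: hform_iff)
  qed simp
qed

lemma lin_comb_in_sections:
  assumes "set vs \<subseteq> sections as"
  shows "lin_comb c vs \<in> sections as"
proof -
  have vs: "vs!j \<in> sections as" if "j < length vs" for j using assms that by auto
  show ?thesis unfolding sections_def lin_comb_def
    using vs by (auto intro!: hform_sum hform_smult sum.neutral simp: sections_def)
qed

lemma lspan_subset_sections: "set vs \<subseteq> sections as \<Longrightarrow> lspan vs \<subseteq> sections as"
  using lin_comb_in_sections by (auto simp: lspan_def)

lemma lin_comb_nonzero:
  assumes "lin_indep vs" "set vs \<subseteq> sections as" "j < length vs" "c j \<noteq> 0"
  shows "\<exists>i<length as. lin_comb c vs i \<noteq> 0"
proof (rule ccontr)
  assume "\<not> (\<exists>i<length as. lin_comb c vs i \<noteq> 0)"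
  with lin_comb_in_sections[OF assms(2)] have "lin_comb c vs = (\<lambda>_. 0)"
    by (auto simp: sections_def fun_eq_iff not_less)
  with assms(1,3,4) show False by (auto simp: lin_indep_def)
qed

lemma inj_matrix_single_column: "inj_matrix n (Suc 0) F \<longleftrightarrow> (\<exists>i<n. F i 0 \<noteq> 0)"
proof
  assume inj: "inj_matrix n (Suc 0) F"
  show "\<exists>i<n. F i 0 \<noteq> 0"
  proof (rule ccontr)
    assume "\<not> (\<exists>i<n. F i 0 \<noteq> 0)"
    with inj[unfolded inj_matrix_def, rule_format, of "\<lambda>_. 1" 0] show False by simp
  qed
qed (auto simp: inj_matrix_def)

lemma alpha_stableD:
  assumes "alpha_stable \<alpha> as vs" "bs \<noteq> []" "length bs \<le> length as" "subbundle_emb as bs M"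
    "lin_indep ws" "set ws \<subseteq> lspan vs" "set ws \<subseteq> sub_sections as bs M"
    "length bs < length as \<or> length ws < length vs"
  shows "mu \<alpha> (int (length bs)) (bdeg bs) (length ws) < mu \<alpha> (int (length as)) (bdeg as) (length vs)"
  using assms unfolding alpha_stable_def by blast

text \<open>The section s of E is the image of the section q of O(b) under the morphism
  h : O(b) \<rightarrow> E.\<close>
definition line_factor :: "int list \<Rightarrow> (nat \<Rightarrow> 'k::field poly) \<Rightarrow> int \<Rightarrow> (nat \<Rightarrow> 'k poly) \<Rightarrow> 'k poly \<Rightarrow> bool" where
  "line_factor as s b h q \<longleftrightarrow>
     hform b q \<and> q \<noteq> 0 \<and> (\<forall>i<length as. hform (as!i - b) (h i) \<and> s i = h i * q)"

lemma line_factor_section: "s \<in> sections as \<Longrightarrow> line_factor as s 0 s 1"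
  by (auto simp: line_factor_def sections_def hform_def)

lemma line_factor_raise:
  assumes fac: "line_factor as s b h q" and not_emb: "\<not> subbundle_emb as [b] (\<lambda>i j. h i)"
  shows "\<exists>h' q'. line_factor as s (b + 1) h' q'"
proof -
  from fac have q: "hform b q" "q \<noteq> 0" and h: "\<And>i. i < length as \<Longrightarrow> hform (as!i - b) (h i)"
    and s: "\<And>i. i < length as \<Longrightarrow> s i = h i * q" by (auto simp: line_factor_def)
  have "0 \<le> b" using q by (auto simp: hform_iff)
  from not_emb h consider (aff) x where "\<forall>i<length as. poly (h i) x = 0"
    | (inf) "\<forall>i<length as. fibre_inf as [b] (\<lambda>i j. h i) i 0 = 0"
    by (auto simp: subbundle_emb_def inj_matrix_single_column fibre_aff_def)
  then show ?thesis
  proof cases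
    case aff
    define l where "l = [:-x, 1:]"
    have "degree (q * l) = degree q + 1" using q(2) by (subst degree_mult_eq) (auto simp: l_def)
    with q \<open>0 \<le> b\<close> have "hform (b + 1) (q * l)" by (auto simp: hform_iff)
    moreover have "hform (as!i - (b + 1)) (h i div l) \<and> s i = (h i div l) * (q * l)"
      if "i < length as" for i
    proof -
      note root = hform_diff1_if_root[OF h[OF that], of x, folded l_def]
      have "s i = (h i div l) * l * q" using s[OF that] root(2) aff that by metis
      then show ?thesis using root(1) aff that by (simp add: diff_diff_eq mult_ac)
    qed
    moreover have "q * l \<noteq> 0" using q(2) by (simp add: l_def del: mult_pCons_right)
    ultimately have "line_factor as s (b + 1) (\<lambda>i. h i div l) (q * l)"
      by (auto simp: line_factor_def)
    then show ?thesis by blast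
  next
    case inf
    have "hform (as!i - (b + 1)) (h i)" if "i < length as" for i
    proof -
      have "0 \<le> as!i - b \<Longrightarrow> coeff (h i) (nat (as!i - b)) = 0"
        using inf that by (auto simp: fibre_inf_def)
      from hform_diff1_if_top_coeff_0[OF h[OF that] this] show ?thesis by (simp add: diff_diff_eq)
    qed
    with q s \<open>0 \<le> b\<close> have "line_factor as s (b + 1) h q" by (auto simp: line_factor_def hform_iff)
    then show ?thesis by blast
  qed
qed

lemma line_factor_saturate:
  assumes "line_factor as s b h q" "i0 < length as" "s i0 \<noteq> 0"
  shows "\<exists>b' h' q'. b \<le> b' \<and> line_factor as s b' h' q' \<and> subbundle_emb as [b'] (\<lambda>i j. h' i)"
  using assms(1)
proof (induction "nat (as!i0 - b)" arbitrary: b h q rule: less_induct)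
  case (less b h q)
  show ?case
  proof (cases "subbundle_emb as [b] (\<lambda>i j. h i)")
    case False
    then obtain h' q' where fac: "line_factor as s (b + 1) h' q'"
      using line_factor_raise[OF less.prems] by blast
    then have "h' i0 \<noteq> 0" "hform (as!i0 - (b + 1)) (h' i0)" using assms(2,3) by (auto simp: line_factor_def)
    then have "nat (as!i0 - (b + 1)) < nat (as!i0 - b)" by (auto simp: hform_iff)
    from less.hyps[OF this fac] obtain b' h'' q'' where
      "b + 1 \<le> b'" "line_factor as s b' h'' q''" "subbundle_emb as [b'] (\<lambda>i j. h'' i)" by blast
    then show ?thesis by (intro exI[of _ b'] exI[of _ h''] exI[of _ q'']) simp
  qed (use less.prems in blast)
qed

lemma alpha_stable_line_factor_bound:
  assumes st: "alpha_stable \<alpha> as vs" and n: "2 \<le> length as"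
    and s: "s \<in> lspan vs" "i0 < length as" "s i0 \<noteq> 0" and fac: "line_factor as s b h q"
  shows "of_int b + \<alpha> < mu \<alpha> (int (length as)) (bdeg as) (length vs)"
proof -
  have "s \<in> sections as"
    using st s(1) lspan_subset_sections by (auto simp: alpha_stable_def coh_system_def)
  obtain b' h' q' where b': "b \<le> b'" "line_factor as s b' h' q'" "subbundle_emb as [b'] (\<lambda>i j. h' i)"
    using line_factor_saturate[OF fac s(2,3)] by blast
  define qs where "qs = (\<lambda>j::nat. if j = 0 then q' else 0)"
  have "qs \<in> sections [b']"
    using b'(2) by (auto simp: sections_def line_factor_def qs_def)
  moreover have "s = (\<lambda>i. if i < length as then (\<Sum>j<length [b']. h' i * qs j) else 0)"
    using b'(2) \<open>s \<in> sections as\<close> by (auto simp: fun_eq_iff line_factor_def sections_def qs_def)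
  ultimately have "s \<in> sub_sections as [b'] (\<lambda>i j. h' i)"
    unfolding sub_sections_def by blast
  moreover have "lin_indep [s]"
    using s(2,3) by (auto simp: lin_indep_def lin_comb_def fun_eq_iff dest!: spec[of _ i0])
  ultimately have "mu \<alpha> 1 b' 1 < mu \<alpha> (int (length as)) (bdeg as) (length vs)"
    using alpha_stableD[OF st _ _ b'(3), of "[s]"] n s(1) by (simp add: bdeg_def)
  with b'(1) show ?thesis by (simp add: mu_def)
qed

lemma inj_matrix_id: "inj_matrix n n (\<lambda>i j. if i = j then 1 else (0::'k::field))"
  unfolding inj_matrix_def by (auto simp: if_distrib[of "\<lambda>x. x * _"] cong: if_cong)

lemma subbundle_emb_id: "subbundle_emb as as (\<lambda>i j. if i = j then 1 else (0::'k::field poly))"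
proof -
  have "fibre_aff as as (\<lambda>i j. if i = j then 1 else 0) x = (\<lambda>i j. if i = j then 1 else (0::'k))"
    "fibre_inf as as (\<lambda>i j. if i = j then 1 else 0) = (\<lambda>i j. if i = j then 1 else (0::'k))" for x
    by (auto simp: fibre_aff_def fibre_inf_def fun_eq_iff)
  then show ?thesis by (auto simp: subbundle_emb_def hform_def inj_matrix_id)
qed

lemma alpha_stable_imp_alpha_pos:
  assumes st: "alpha_stable \<alpha> as vs" and "vs \<noteq> []"
  shows "0 < \<alpha>"
proof -
  have "as \<noteq> []" using st by (simp add: alpha_stable_def)
  have "mu \<alpha> (int (length as)) (bdeg as) 0 < mu \<alpha> (int (length as)) (bdeg as) (length vs)"
    using alpha_stableD[OF st _ _ subbundle_emb_id, of "[]"] \<open>as \<noteq> []\<close> \<open>vs \<noteq> []\<close>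
    by (simp add: lin_indep_def)
  then have "0 < \<alpha> * real (length vs) / real (length as)" by (simp add: mu_def)
  with \<open>vs \<noteq> []\<close> show ?thesis by (simp add: zero_less_divide_iff zero_less_mult_iff)
qed

lemma coeff_mult_at_degree_bounds:
  fixes p q :: "'a::comm_semiring_1 poly"
  assumes "degree p \<le> m" "degree q \<le> k"
  shows "coeff (p * q) (m + k) = coeff p m * coeff q k"
proof -
  have "coeff (p * q) (m + k) = (\<Sum>i\<le>m + k. coeff p i * coeff q (m + k - i))"
    by (rule coeff_mult)
  also have "\<dots> = (\<Sum>i\<in>{m}. coeff p i * coeff q (m + k - i))"
  proof (rule sum.mono_neutral_right)
    show "\<forall>i\<in>{..m + k} - {m}. coeff p i * coeff q (m + k - i) = 0"
    proof
      fix i assume "i \<in> {..m + k} - {m}"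
      then consider "i < m" | "m < i" by fastforce
      then show "coeff p i * coeff q (m + k - i) = 0"
        by cases (use assms in \<open>simp_all add: coeff_eq_0\<close>)
    qed
  qed auto
  finally show ?thesis by simp
qed

lemma coeff_prod_at_degree_bounds:
  fixes f :: "'i \<Rightarrow> 'a::comm_semiring_1 poly"
  assumes "finite I" "\<And>i. i \<in> I \<Longrightarrow> degree (f i) \<le> d i"
  shows "coeff (\<Prod>i\<in>I. f i) (\<Sum>i\<in>I. d i) = (\<Prod>i\<in>I. coeff (f i) (d i))"
  using assms
proof (induction I rule: finite_induct)
  case (insert x F)
  have "degree (\<Prod>i\<in>F. f i) \<le> (\<Sum>i\<in>F. d i)"
    by (rule order.trans[OF degree_prod_sum_le[OF insert.hyps(1)]]) (use insert.prems in \<open>auto intro: sum_mono\<close>)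
  then show ?case using insert by (simp add: coeff_mult_at_degree_bounds)
qed simp

lemma coeff_det_at_degree_bounds:
  fixes A :: "'a::comm_ring_1 poly mat"
  assumes A: "A \<in> carrier_mat n n" and deg: "\<And>i j. i < n \<Longrightarrow> j < n \<Longrightarrow> degree (A $$ (i,j)) \<le> d i"
  shows "coeff (det A) (\<Sum>i<n. d i) = det (mat n n (\<lambda>(i,j). coeff (A $$ (i,j)) (d i)))"
proof -
  have coeff_signof: "coeff (signof p * P) k = signof p * coeff P k" for p and P :: "'a poly" and k
    by (simp add: sign_def)
  have "coeff (det A) (\<Sum>i<n. d i) =
     (\<Sum>p\<in>{p. p permutes {0..<n}}. signof p * coeff (\<Prod>i = 0..<n. A $$ (i, p i)) (\<Sum>i<n. d i))"
    by (simp add: det_def'[OF A] coeff_sum coeff_signof)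
  also have "\<dots> = (\<Sum>p\<in>{p. p permutes {0..<n}}. signof p * (\<Prod>i = 0..<n. coeff (A $$ (i, p i)) (d i)))"
  proof (rule sum.cong[OF refl])
    fix p assume "p \<in> {p. p permutes {0..<n}}"
    then have "\<And>i. i < n \<Longrightarrow> p i < n" by (auto simp: permutes_in_image)
    then show "signof p * coeff (\<Prod>i = 0..<n. A $$ (i, p i)) (\<Sum>i<n. d i) =
       signof p * (\<Prod>i = 0..<n. coeff (A $$ (i, p i)) (d i))"
      using coeff_prod_at_degree_bounds[of "{0..<n}" "\<lambda>i. A $$ (i, p i)" d] deg
      by (auto simp: atLeast0LessThan)
  qed
  also have "\<dots> = det (mat n n (\<lambda>(i,j). coeff (A $$ (i,j)) (d i)))"
    by (subst det_def'[of _ n]) (auto intro!: sum.cong prod.cong dest: permutes_in_image)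
  finally show ?thesis .
qed

lemma poly_det: "poly (det A) x = det (map_mat (\<lambda>p. poly p x) A)"
proof -
  interpret comm_ring_hom "\<lambda>p. poly p x" by unfold_locales auto
  show ?thesis by simp
qed

lemma det_ne_0_if_inj_matrix:
  fixes F :: "nat \<Rightarrow> nat \<Rightarrow> 'k::field"
  assumes "inj_matrix n n F"
  shows "det (mat n n (\<lambda>(i,j). F i j)) \<noteq> 0"
proof
  assume "det (mat n n (\<lambda>(i,j). F i j)) = 0"
  then obtain v where v: "v \<in> carrier_vec n" "v \<noteq> 0\<^sub>v n" "mat n n (\<lambda>(i,j). F i j) *\<^sub>v v = 0\<^sub>v n"
    using det_0_iff_vec_prod_zero[of "mat n n (\<lambda>(i,j). F i j)" n] by auto
  have "(\<Sum>j<n. F i j * v $ j) = 0" if "i < n" for i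
    using arg_cong[OF v(3), of "\<lambda>w. w $ i"] that v(1)
    by (simp add: scalar_prod_def atLeast0LessThan)
  with assms have "\<forall>j<n. v $ j = 0" by (simp add: inj_matrix_def)
  with v(1,2) show False by (auto simp: vec_eq_iff)
qed

lemma bdeg_le_0_if_trivial_subbundle_emb:
  fixes M :: "nat \<Rightarrow> nat \<Rightarrow> 'k::alg_closed_field poly"
  assumes emb: "subbundle_emb as (replicate (length as) 0) M"
  shows "bdeg as \<le> 0"
proof -
  let ?n = "length as" and ?zs = "replicate (length as) (0::int)"
  define A where "A = mat ?n ?n (\<lambda>(i,j). M i j)"
  define d where "d i = nat (as!i)" for i
  have A: "A \<in> carrier_mat ?n ?n" by (simp add: A_def)
  have hf: "hform (as!i) (M i j)" if "i < ?n" "j < ?n" for i j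
    using emb that by (simp add: subbundle_emb_def)
  have "poly (det A) x \<noteq> 0" for x
  proof -
    have "map_mat (\<lambda>p. poly p x) A = mat ?n ?n (\<lambda>(i,j). fibre_aff as ?zs M x i j)"
      by (auto simp: A_def fibre_aff_def)
    then show ?thesis
      using det_ne_0_if_inj_matrix[of ?n "fibre_aff as ?zs M x"] emb
      by (simp add: poly_det subbundle_emb_def)
  qed
  then have "degree (det A) = 0" using alg_closed_imp_poly_has_root by blast
  have "degree (A $$ (i,j)) \<le> d i" if "i < ?n" "j < ?n" for i j
    using hf[OF that] that by (auto simp: A_def d_def hform_def split: if_splits)
  then have "coeff (det A) (\<Sum>i<?n. d i) = det (mat ?n ?n (\<lambda>(i,j). coeff (A $$ (i,j)) (d i)))"
    by (rule coeff_det_at_degree_bounds[OF A])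
  also have "mat ?n ?n (\<lambda>(i,j). coeff (A $$ (i,j)) (d i)) = mat ?n ?n (\<lambda>(i,j). fibre_inf as ?zs M i j)"
    using hf by (auto simp: A_def d_def fibre_inf_def hform_def)
  also have "det \<dots> \<noteq> 0"
    using det_ne_0_if_inj_matrix[of ?n "fibre_inf as ?zs M"] emb by (simp add: subbundle_emb_def)
  finally have "coeff (det A) (\<Sum>i<?n. d i) \<noteq> 0" .
  with \<open>degree (det A) = 0\<close> have "(\<Sum>i<?n. d i) = 0"
    by (metis coeff_eq_0 gr_zeroI)
  then have "as!i \<le> 0" if "i < ?n" for i using that by (simp add: d_def)
  then have "(\<Sum>i<?n. as!i) \<le> 0" by (intro sum_nonpos) simp
  then show ?thesis by (simp add: bdeg_def sum_list_sum_nth atLeast0LessThan)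
qed

lemma poly_lin_comb: "poly (lin_comb c vs i) x = (\<Sum>j<length vs. c j * poly ((vs!j) i) x)"
  by (simp add: lin_comb_def poly_sum)

lemma coeff_lin_comb: "coeff (lin_comb c vs i) k = (\<Sum>j<length vs. c j * coeff ((vs!j) i) k)"
  by (simp add: lin_comb_def coeff_sum)

lemma evaluation_subbundle_emb:
  assumes secs: "set vs \<subseteq> sections as"
    and lines: "\<And>c j. j < length vs \<Longrightarrow> c j \<noteq> 0 \<Longrightarrow> subbundle_emb as [0] (\<lambda>i _. lin_comb c vs i)"
  shows "subbundle_emb as (replicate (length vs) 0) (\<lambda>i j. (vs!j) i)"
  unfolding subbundle_emb_def length_replicate
proof (intro conjI allI impI)
  show "hform (as!i - replicate (length vs) 0 ! j) ((vs!j) i)" if "i < length as" "j < length vs" for i j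
  proof -
    have "vs!j \<in> sections as" using secs that(2) by auto
    with that show ?thesis by (simp add: sections_def)
  qed
  show "inj_matrix (length as) (length vs) (fibre_aff as (replicate (length vs) 0) (\<lambda>i j. (vs!j) i) x)" for x
    unfolding inj_matrix_def
  proof (intro allI impI)
    fix c j
    assume "\<forall>i<length as. (\<Sum>j<length vs. fibre_aff as (replicate (length vs) 0) (\<lambda>i j. (vs!j) i) x i j * c j) = 0"
    then have "\<forall>i<length as. poly (lin_comb c vs i) x = 0"
      by (simp add: fibre_aff_def poly_lin_comb mult.commute)
    moreover assume "j < length vs"
    ultimately show "c j = 0"
      using lines[of j c] by (auto simp: subbundle_emb_def inj_matrix_single_column fibre_aff_def)
  qed
  show "inj_matrix (length as) (length vs) (fibre_inf as (replicate (length vs) 0) (\<lambda>i j. (vs!j) i))"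
    unfolding inj_matrix_def
  proof (intro allI impI)
    fix c j
    assume "\<forall>i<length as. (\<Sum>j<length vs. fibre_inf as (replicate (length vs) 0) (\<lambda>i j. (vs!j) i) i j * c j) = 0"
    moreover have "fibre_inf as [0] (\<lambda>i _. lin_comb c vs i) i 0 =
        (\<Sum>j<length vs. fibre_inf as (replicate (length vs) 0) (\<lambda>i j. (vs!j) i) i j * c j)" for i
      by (auto simp: fibre_inf_def coeff_lin_comb mult.commute intro!: sum.cong)
    ultimately have "\<forall>i<length as. fibre_inf as [0] (\<lambda>i _. lin_comb c vs i) i 0 = 0" by simp
    moreover assume "j < length vs"
    ultimately show "c j = 0"
      using lines[of j c] by (auto simp: subbundle_emb_def inj_matrix_single_column)
  qed
qed

lemma alpha_stable_section_line_subbundle: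
  assumes st: "alpha_stable \<alpha> as vs" and n: "2 \<le> length as"
    and mu: "mu \<alpha> (int (length as)) (bdeg as) (length vs) \<le> 1 + \<alpha>"
    and s: "s \<in> lspan vs" "i0 < length as" "s i0 \<noteq> 0"
  shows "subbundle_emb as [0] (\<lambda>i _. s i)"
proof (rule ccontr)
  assume "\<not> subbundle_emb as [0] (\<lambda>i _. s i)"
  moreover have "s \<in> sections as"
    using st s(1) lspan_subset_sections by (auto simp: alpha_stable_def coh_system_def)
  ultimately obtain h q where "line_factor as s 1 h q"
    using line_factor_raise[OF line_factor_section] by fastforce
  from alpha_stable_line_factor_bound[OF st n s this] mu show False by simp
qed

lemma alpha_stable_alpha_lt_mu:
  assumes st: "alpha_stable \<alpha> as vs" and n: "2 \<le> length as" and "vs \<noteq> []"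
  shows "\<alpha> < mu \<alpha> (int (length as)) (bdeg as) (length vs)"
proof -
  have indep: "lin_indep vs" and secs: "set vs \<subseteq> sections as"
    using st by (auto simp: alpha_stable_def coh_system_def)
  define c :: "nat \<Rightarrow> 'a" where "c j = (if j = 0 then 1 else 0)" for j
  obtain i0 where "i0 < length as" "lin_comb c vs i0 \<noteq> 0"
    using lin_comb_nonzero[OF indep secs, of 0 c] \<open>vs \<noteq> []\<close> by (auto simp: c_def)
  moreover have "lin_comb c vs \<in> lspan vs" by (auto simp: lspan_def)
  ultimately show ?thesis
    using alpha_stable_line_factor_bound[OF st n _ _ _ line_factor_section[OF lin_comb_in_sections[OF secs]]]
    by simp
qed

lemma alpha_stable_bdeg_le_0_if_mu_le:
  fixes vs :: "(nat \<Rightarrow> 'k::alg_closed_field poly) list"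
  assumes st: "alpha_stable \<alpha> as vs" and n: "2 \<le> length as" and len: "length vs = length as"
    and mu: "mu \<alpha> (int (length as)) (bdeg as) (length vs) \<le> 1 + \<alpha>"
  shows "bdeg as \<le> 0"
proof -
  have indep: "lin_indep vs" and secs: "set vs \<subseteq> sections as"
    using st by (auto simp: alpha_stable_def coh_system_def)
  have "subbundle_emb as [0] (\<lambda>i _. lin_comb c vs i)" if j: "j < length vs" "c j \<noteq> 0" for c j
  proof -
    obtain i0 where "i0 < length as" "lin_comb c vs i0 \<noteq> 0"
      using lin_comb_nonzero[OF indep secs, of j c] j by blast
    moreover have "lin_comb c vs \<in> lspan vs" by (auto simp: lspan_def)
    ultimately show ?thesis using alpha_stable_section_line_subbundle[OF st n mu] by blast
  qed
  from evaluation_subbundle_emb[OF secs this] len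
  have "subbundle_emb as (replicate (length as) 0) (\<lambda>i j. (vs!j) i)" by simp
  then show ?thesis by (rule bdeg_le_0_if_trivial_subbundle_emb)
qed

lemma alpha_stable_balanced_type_imp:
  fixes vs :: "(nat \<Rightarrow> 'k::alg_closed_field poly) list"
  assumes n: "2 \<le> length as" and len: "length vs = length as"
    and deg: "bdeg as = int (length as) * a" and st: "alpha_stable \<alpha> as vs"
  shows "2 \<le> a \<and> 0 < \<alpha>"
proof -
  have "as \<noteq> []" "vs \<noteq> []" using n len by auto
  then have mu: "mu \<alpha> (int (length as)) (bdeg as) (length vs) = of_int a + \<alpha>"
    using len deg by (simp add: mu_def)
  then have "0 < a" using alpha_stable_alpha_lt_mu[OF st n \<open>vs \<noteq> []\<close>] by simp
  moreover have "a \<noteq> 1"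
  proof
    assume "a = 1"
    with alpha_stable_bdeg_le_0_if_mu_le[OF st n len] mu have "bdeg as \<le> 0" by simp
    with deg n \<open>a = 1\<close> show False by simp
  qed
  moreover have "0 < \<alpha>" using alpha_stable_imp_alpha_pos[OF st \<open>vs \<noteq> []\<close>] .
  ultimately show ?thesis by auto
qed

text \<open>s_j = e_j + t e_{j+1} + t^2 e_{j-1}: the t- and t^2-coefficients of a section of V are
  the right and the left shift of its constant coefficients.\<close>
definition shift_section :: "nat \<Rightarrow> nat \<Rightarrow> nat \<Rightarrow> 'k::field poly" where
  "shift_section n j =
     (\<lambda>i. if i < n then [:of_bool (i = j), of_bool (i = Suc j), of_bool (j = Suc i):] else 0)"

definition shift_sections :: "nat \<Rightarrow> (nat \<Rightarrow> 'k::field poly) list" where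
  "shift_sections n = map (shift_section n) [0..<n]"

definition coeff_vec :: "nat \<Rightarrow> nat \<Rightarrow> (nat \<Rightarrow> 'k::zero poly) \<Rightarrow> nat \<Rightarrow> 'k" where
  "coeff_vec n k s = (\<lambda>i. if i < n then coeff (s i) k else 0)"

lemma length_shift_sections [simp]: "length (shift_sections n) = n"
  by (simp add: shift_sections_def)

lemma nth_shift_sections [simp]: "j < n \<Longrightarrow> shift_sections n ! j = shift_section n j"
  by (simp add: shift_sections_def)

lemma coeff_lin_comb_shift_sections:
  assumes i: "i < n"
  shows "coeff (lin_comb c (shift_sections n) i) 0 = c i"
    and "coeff (lin_comb c (shift_sections n) i) 1 = (if i = 0 then 0 else c (i - 1))"
    and "coeff (lin_comb c (shift_sections n) i) 2 = (if Suc i < n then c (Suc i) else 0)"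
proof -
  have coeff_eq: "coeff (lin_comb c (shift_sections n) i) k = (\<Sum>j<n. c j * coeff (shift_section n j i) k)" for k
    by (simp add: coeff_lin_comb)
  have "(\<Sum>j<n. c j * coeff (shift_section n j i) 0) = (\<Sum>j<n. if j = i then c j else 0)"
    using i by (intro sum.cong) (auto simp: shift_section_def)
  with i coeff_eq show "coeff (lin_comb c (shift_sections n) i) 0 = c i" by simp
  show "coeff (lin_comb c (shift_sections n) i) 1 = (if i = 0 then 0 else c (i - 1))"
  proof (cases i)
    case 0
    then have "(\<Sum>j<n. c j * coeff (shift_section n j i) 1) = 0"
      by (auto simp: shift_section_def intro!: sum.neutral)
    with 0 coeff_eq show ?thesis by simp
  next
    case (Suc k)
    then have "(\<Sum>j<n. c j * coeff (shift_section n j i) 1) = (\<Sum>j<n. if j = k then c j else 0)"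
      using i by (intro sum.cong) (auto simp: shift_section_def)
    with i Suc coeff_eq show ?thesis by simp
  qed
  have "(\<Sum>j<n. c j * coeff (shift_section n j i) 2) = (\<Sum>j<n. if j = Suc i then c j else 0)"
    using i by (intro sum.cong) (auto simp: shift_section_def numeral_2_eq_2)
  with coeff_eq show "coeff (lin_comb c (shift_sections n) i) 2 = (if Suc i < n then c (Suc i) else 0)"
    by simp
qed

lemma coeff_vec_0_shift_sections:
  "coeff_vec n 0 (lin_comb c (shift_sections n)) = (\<lambda>i. if i < n then c i else 0)"
  by (simp add: fun_eq_iff coeff_vec_def coeff_lin_comb_shift_sections)

lemma coeff_vec_1_shift_sections:
  "coeff_vec n 1 (lin_comb c (shift_sections n)) = shift_right n (coeff_vec n 0 (lin_comb c (shift_sections n)))"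
  by (auto simp: fun_eq_iff coeff_vec_def coeff_lin_comb_shift_sections[simplified] shift_right_def)

lemma coeff_vec_2_shift_sections:
  "coeff_vec n 2 (lin_comb c (shift_sections n)) = shift_left n (coeff_vec n 0 (lin_comb c (shift_sections n)))"
  by (auto simp: fun_eq_iff coeff_vec_def coeff_lin_comb_shift_sections[simplified] shift_left_def)

lemma shift_sections_in_sections:
  assumes "2 \<le> a"
  shows "set (shift_sections n) \<subseteq> sections (replicate n a)"
proof
  fix s assume "s \<in> set (shift_sections n)"
  then obtain j where "s = shift_section n j" by (auto simp: shift_sections_def)
  moreover have "degree ([:x, y, z:] :: 'a poly) \<le> 2" for x y z
    by (auto simp: degree_pCons_eq_if numeral_2_eq_2)
  ultimately show "s \<in> sections (replicate n a)"
    using assms by (auto simp: sections_def shift_section_def hform_def)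
qed

lemma lin_indep_shift_sections: "lin_indep (shift_sections n :: (nat \<Rightarrow> 'k::field poly) list)"
  unfolding lin_indep_def
proof (intro allI impI)
  fix c :: "nat \<Rightarrow> 'k" and j
  assume "lin_comb c (shift_sections n) = (\<lambda>_. 0)" "j < length (shift_sections n :: (nat \<Rightarrow> 'k poly) list)"
  with coeff_vec_0_shift_sections[of n c] show "c j = 0"
    by (simp add: coeff_vec_def fun_eq_iff) (metis coeff_0)
qed

lemma smult_sum_right: "Polynomial.smult c (sum f A) = (\<Sum>x\<in>A. Polynomial.smult c (f x))"
  by (induction A rule: infinite_finite_induct) (auto simp: smult_add_right)

lemma coeff_vec_0_vec_indep:
  assumes indep: "lin_indep ws" and span: "set ws \<subseteq> lspan (shift_sections n)"
  shows "vec_indep (map (coeff_vec n 0) ws)"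
  unfolding vec_indep_def
proof (intro allI impI)
  fix d l assume d: "vec_comb d (map (coeff_vec n 0) ws) = 0" and l: "l < length (map (coeff_vec n 0) ws)"
  have "\<forall>l. \<exists>c. l < length ws \<longrightarrow> ws!l = lin_comb c (shift_sections n)"
    using span by (auto simp: lspan_def subset_iff in_set_conv_nth)
  then obtain C where C: "\<And>l. l < length ws \<Longrightarrow> ws!l = lin_comb (C l) (shift_sections n)"
    by metis
  define e where "e j = (\<Sum>l<length ws. d l * C l j)" for j
  have "lin_comb d ws = lin_comb e (shift_sections n)"
  proof
    fix i
    have "lin_comb d ws i =
        (\<Sum>l<length ws. Polynomial.smult (d l) (\<Sum>j<n. Polynomial.smult (C l j) (shift_section n j i)))"
      unfolding lin_comb_def using C by (auto intro!: sum.cong simp: lin_comb_def)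
    also have "\<dots> = (\<Sum>j<n. \<Sum>l<length ws. Polynomial.smult (d l * C l j) (shift_section n j i))"
      by (simp add: smult_sum_right sum.swap[of _ "{..<n}"])
    also have "\<dots> = lin_comb e (shift_sections n) i"
      by (simp add: lin_comb_def e_def smult_sum)
    finally show "lin_comb d ws i = lin_comb e (shift_sections n) i" .
  qed
  also have "\<dots> = (\<lambda>_. 0)"
  proof -
    have "e j = vec_comb d (map (coeff_vec n 0) ws) j" if "j < n" for j
      using C that by (auto intro!: sum.cong simp: vec_comb_def e_def coeff_vec_0_shift_sections)
    then have "e j = 0" if "j < n" for j using d that by simp
    then show ?thesis by (auto simp: lin_comb_def fun_eq_iff)
  qed
  finally show "d l = 0" using indep l by (auto simp: lin_indep_def)
qed

lemma subbundle_emb_replicate_le: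
  fixes M :: "nat \<Rightarrow> nat \<Rightarrow> 'k::field poly"
  assumes emb: "subbundle_emb (replicate n a) bs M" and b: "b \<in> set bs"
  shows "b \<le> a"
proof (rule ccontr)
  assume "\<not> b \<le> a"
  obtain j where j: "j < length bs" "bs!j = b" using b by (auto simp: in_set_conv_nth)
  have forms: "\<forall>i<n. \<forall>j<length bs. hform (a - bs!j) (M i j)"
    using emb by (simp add: subbundle_emb_def)
  have "hform (a - b) (M i j)" if "i < n" for i
    using forms j that by blast
  with \<open>\<not> b \<le> a\<close> have zero: "M i j = 0" if "i < n" for i
    using that by (simp add: hform_def)
  define c :: "nat \<Rightarrow> 'k" where "c l = (if l = j then 1 else 0)" for l
  have "\<forall>i<n. (\<Sum>l<length bs. fibre_aff (replicate n a) bs M 0 i l * c l) = 0"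
    using zero by (auto intro!: sum.neutral simp: c_def fibre_aff_def)
  moreover have "inj_matrix n (length bs) (fibre_aff (replicate n a) bs M 0)"
    using emb by (simp add: subbundle_emb_def)
  ultimately have "c j = 0" using j(1) unfolding inj_matrix_def by blast
  then show False by (simp add: c_def)
qed

lemma bdeg_le_replicate:
  assumes "\<And>b. b \<in> set bs \<Longrightarrow> b \<le> a"
  shows "bdeg bs \<le> int (length bs) * a" and "bdeg bs = int (length bs) * a \<Longrightarrow> set bs \<subseteq> {a}"
proof -
  from assms have "bdeg bs \<le> int (length bs) * a \<and> (bdeg bs = int (length bs) * a \<longrightarrow> set bs \<subseteq> {a})"
  proof (induction bs)
    case (Cons b bs)
    then have "b \<le> a" "bdeg bs \<le> int (length bs) * a \<and> (bdeg bs = int (length bs) * a \<longrightarrow> set bs \<subseteq> {a})"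
      by auto
    then show ?case by (auto simp: bdeg_def algebra_simps)
  qed (simp add: bdeg_def)
  then show "bdeg bs \<le> int (length bs) * a" and "bdeg bs = int (length bs) * a \<Longrightarrow> set bs \<subseteq> {a}"
    by auto
qed

definition const_columns :: "nat \<Rightarrow> nat \<Rightarrow> (nat \<Rightarrow> nat \<Rightarrow> 'k::zero poly) \<Rightarrow> (nat \<Rightarrow> 'k) list" where
  "const_columns n m M = map (\<lambda>j i. if i < n then coeff (M i j) 0 else 0) [0..<m]"

lemma length_const_columns [simp]: "length (const_columns n m M) = m"
  by (simp add: const_columns_def)

lemma coeff_vec_sub_sections:
  assumes s: "s \<in> sub_sections as bs M"
    and const: "k = 0 \<or> (\<forall>i<length as. \<forall>j<length bs. degree (M i j) = 0)"
  shows "coeff_vec (length as) k s \<in> fvec.span (set (const_columns (length as) (length bs) M))"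
proof -
  obtain q where s: "s = (\<lambda>i. if i < length as then (\<Sum>j<length bs. M i j * q j) else 0)"
    using s by (auto simp: sub_sections_def)
  have coeff_const: "coeff (M i j * q j) k = coeff (q j) k * coeff (M i j) 0"
    if "i < length as" "j < length bs" for i j
  proof (cases "k = 0")
    case False
    with const that obtain c where "M i j = [:c:]" by (metis degree_eq_zeroE)
    then show ?thesis by simp
  qed (simp add: coeff_mult_0)
  have "coeff_vec (length as) k s = vec_comb (\<lambda>j. coeff (q j) k) (const_columns (length as) (length bs) M)"
    by (auto simp: fun_eq_iff coeff_vec_def s vec_comb_def const_columns_def coeff_sum coeff_const)
  then show ?thesis using vec_comb_in_span by metis
qed

lemma shift_sections_subsystem_dim_le:
  assumes "lin_indep ws" "set ws \<subseteq> lspan (shift_sections n)"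
    and "set ws \<subseteq> sub_sections (replicate n a) bs M"
  shows "length ws \<le> length bs"
proof -
  have "set (map (coeff_vec n 0) ws) \<subseteq> fvec.span (set (const_columns n (length bs) M))"
    using coeff_vec_sub_sections[of _ "replicate n a", where k = 0] assms(3) by fastforce
  from vec_indep_length_le[OF coeff_vec_0_vec_indep[OF assms(1,2)] this] show ?thesis by simp
qed

lemma shift_sections_const_subsystem:
  assumes indep: "lin_indep ws" and span: "set ws \<subseteq> lspan (shift_sections n)"
    and sub: "set ws \<subseteq> sub_sections (replicate n a) bs M"
    and const: "\<forall>i<n. \<forall>j<length bs. degree (M i j) = 0"
    and len: "length ws = length bs" and nonempty: "ws \<noteq> []"
  shows "n \<le> length ws"
proof -
  let ?us = "map (coeff_vec n 0) ws" and ?cols = "const_columns n (length bs) M"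
  have in_span: "coeff_vec n k s \<in> fvec.span (set ?cols)" if "s \<in> set ws" for k s
    using coeff_vec_sub_sections[of s "replicate n a" bs M k] sub const that by auto
  have us_indep: "vec_indep ?us" by (rule coeff_vec_0_vec_indep[OF indep span])
  moreover have "set ?us \<subseteq> fvec.span (set ?cols)" using in_span by auto
  ultimately have cols_span: "fvec.span (set ?cols) \<subseteq> fvec.span (set ?us)"
    using len by (intro vec_indep_spans_span) simp_all
  have shifts: "shift_right n (coeff_vec n 0 s) \<in> fvec.span (set ?us) \<and>
      shift_left n (coeff_vec n 0 s) \<in> fvec.span (set ?us)" if s: "s \<in> set ws" for s
  proof -
    obtain c where c: "s = lin_comb c (shift_sections n)" using span s unfolding lspan_def by blast
    have "shift_right n (coeff_vec n 0 s) = coeff_vec n 1 s" "shift_left n (coeff_vec n 0 s) = coeff_vec n 2 s"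
      unfolding c coeff_vec_1_shift_sections coeff_vec_2_shift_sections by (rule refl)+
    then show ?thesis using in_span[OF s, of 1] in_span[OF s, of 2] cols_span by auto
  qed
  have "n \<le> length ?us"
  proof (rule shift_invariant_span_length_ge[OF us_indep])
    show "?us \<noteq> []" using nonempty by simp
    show "u i = 0" if "u \<in> set ?us" "n \<le> i" for u i using that by (auto simp: coeff_vec_def)
    show "shift_right n u \<in> fvec.span (set ?us)" "shift_left n u \<in> fvec.span (set ?us)"
      if "u \<in> set ?us" for u using shifts that by auto
  qed
  then show ?thesis by simp
qed

lemma shift_sections_subsystem_slope_lt:
  fixes \<alpha> :: real and ws :: "(nat \<Rightarrow> 'k::field poly) list"
  assumes \<alpha>: "0 < \<alpha>" and bs: "bs \<noteq> []" and emb: "subbundle_emb (replicate n a) bs M"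
    and indep: "lin_indep ws" and span: "set ws \<subseteq> lspan (shift_sections n)"
    and sub: "set ws \<subseteq> sub_sections (replicate n a) bs M"
    and proper: "length bs < n \<or> length ws < n"
  shows "of_int (bdeg bs) + \<alpha> * length ws < (of_int a + \<alpha>) * length bs"
proof -
  let ?m = "length bs" and ?w = "length ws"
  have le_a: "b \<le> a" if "b \<in> set bs" for b using subbundle_emb_replicate_le[OF emb that] .
  have deg: "bdeg bs \<le> int ?m * a" by (rule bdeg_le_replicate(1)[OF le_a])
  have dim: "?w \<le> ?m" by (rule shift_sections_subsystem_dim_le[OF indep span sub])
  have distrib: "(of_int a + \<alpha>) * ?m = of_int a * ?m + \<alpha> * ?m" by (simp add: distrib_right)
  show ?thesis
  proof (cases "?w < ?m")
    case True
    then have "\<alpha> * ?w < \<alpha> * ?m" using \<alpha> by simp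
    moreover have "real_of_int (bdeg bs) \<le> of_int (int ?m * a)" using deg by (simp only: of_int_le_iff)
    ultimately show ?thesis using distrib by (simp add: mult.commute)
  next
    case False
    with dim have w: "?w = ?m" by simp
    have "bdeg bs < int ?m * a"
    proof (rule ccontr)
      assume "\<not> bdeg bs < int ?m * a"
      with deg have "set bs \<subseteq> {a}" using bdeg_le_replicate(2)[OF le_a] by simp
      then have "\<forall>i<n. \<forall>j<?m. degree (M i j) = 0"
        using emb nth_mem[of _ bs] by (fastforce simp: subbundle_emb_def hform_def)
      moreover have "ws \<noteq> []" using w bs by (metis length_0_conv)
      ultimately have "n \<le> ?w" using shift_sections_const_subsystem[OF indep span sub _ w] by blast
      with w proper show False by simp
    qed
    then have "real_of_int (bdeg bs) < of_int (int ?m * a)" by (simp only: of_int_less_iff)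
    with w distrib show ?thesis by (simp add: mult.commute)
  qed
qed

lemma shift_sections_alpha_stable:
  fixes \<alpha> :: real and a :: int
  assumes n: "2 \<le> n" and a: "2 \<le> a" and \<alpha>: "0 < \<alpha>"
  shows "alpha_stable \<alpha> (replicate n a) (shift_sections n :: (nat \<Rightarrow> 'k::field poly) list)"
  unfolding alpha_stable_def
proof (intro conjI allI impI)
  show "coh_system (replicate n a) (shift_sections n :: (nat \<Rightarrow> 'k poly) list)"
    unfolding coh_system_def by (intro conjI shift_sections_in_sections[OF a] lin_indep_shift_sections)
  show "replicate n a \<noteq> []" using n by simp
  fix bs M and ws :: "(nat \<Rightarrow> 'k poly) list"
  assume "bs \<noteq> [] \<and> length bs \<le> length (replicate n a) \<and> subbundle_emb (replicate n a) bs M \<and>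
    lin_indep ws \<and> set ws \<subseteq> lspan (shift_sections n) \<inter> sub_sections (replicate n a) bs M \<and>
    (length bs < length (replicate n a) \<or> length ws < length (shift_sections n :: (nat \<Rightarrow> 'k poly) list))"
  then have bs: "bs \<noteq> []" and emb: "subbundle_emb (replicate n a) bs M"
    and indep: "lin_indep ws" and span: "set ws \<subseteq> lspan (shift_sections n)"
    and sub: "set ws \<subseteq> sub_sections (replicate n a) bs M"
    and proper: "length bs < n \<or> length ws < n" by auto
  note slope = shift_sections_subsystem_slope_lt[OF \<alpha> bs emb indep span sub proper]
  from slope bs n show "mu \<alpha> (int (length bs)) (bdeg bs) (length ws) <
      mu \<alpha> (int (length (replicate n a))) (bdeg (replicate n a)) (length (shift_sections n :: (nat \<Rightarrow> 'k poly) list))"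
    by (simp add: mu_def bdeg_def sum_list_replicate add_divide_distrib[symmetric] pos_divide_less_eq)
qed

theorem proposition9p1:
  fixes n :: nat and a :: int and \<alpha> :: real
  assumes "n \<ge> 2"
  shows "G_nonempty TYPE('k::alg_closed_field) \<alpha> n (int n * a) n \<longleftrightarrow> (a \<ge> 2 \<and> \<alpha> > 0)"
proof
  assume "G_nonempty TYPE('k) \<alpha> n (int n * a) n"
  then obtain as and vs :: "(nat \<Rightarrow> 'k poly) list" where
    "length as = n" "bdeg as = int n * a" "length vs = n" "alpha_stable \<alpha> as vs"
    unfolding G_nonempty_def by blast
  with assms show "a \<ge> 2 \<and> \<alpha> > 0" using alpha_stable_balanced_type_imp[of as vs a \<alpha>] by simp
next
  assume "a \<ge> 2 \<and> \<alpha> > 0"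
  with assms have "alpha_stable \<alpha> (replicate n a) (shift_sections n :: (nat \<Rightarrow> 'k poly) list)"
    by (intro shift_sections_alpha_stable) auto
  then show "G_nonempty TYPE('k) \<alpha> n (int n * a) n"
    unfolding G_nonempty_def
    by (intro exI[of _ "replicate n a"] exI[of _ "shift_sections n"]) (simp add: bdeg_def sum_list_replicate)
qed
end
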